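(* Let $p_1,p_2\ge3$, and let $J(x,y)$, $J_0$ and $C$ be the $p_1p_2\times p_1p_2$ matrices described in the context, and put $J_1(x,y)=J(x,y)-J_0$. Then for every $(x,y)\in[0,2\pi]^2$, $$-C\le J_1(x,y)\le C,$$ where for Hermitian matrices $A\le B$ means that $B-A$ is positive semidefinite.
   Context: Let $a^0,a^1,b^0,b^1:\mathbb{Z}^2\to\mathbb{C}$, $(n,m)\mapsto a^j_{nm},b^j_{nm}$, be $(p_1,p_2)$-periodic with $b^1_{nm}\in\mathbb{R}$. For $x\in[0,2\pi]$ and $n\in\mathbb{Z}$, $\hat A_n(x)$ is the $p_2\times p_2$ matrix with $(\hat A_n)_{mm}=a^1_{nm}$, $(\hat A_n)_{m+1,m}=a^0_{nm}$, $(\hat A_n)_{m,m+1}=\overline{a^0_{nm}}$ ($1\le m\le p_2-1$), $(\hat A_n)_{1,p_2}=e^{ix}a^0_{np_2}$, $(\hat A_n)_{p_2,1}=e^{-ix}\overline{a^0_{np_2}}$, other entries $0$; $\hat B_n(x)$ is defined the same way from $b^1,b^0$. $\hat A^0_n,\hat B^0_n$ denote $\hat A_n,\hat B_n$ with the corner entries $(1,p_2),(p_2,1)$ set to $0$. $J(x,y)$ is the $p_1\times p_1$ block matrix ($p_2\times p_2$ blocks) with diagonal blocks $\hat B_n(x)$, block $(n+1,n)=\hat A_n(x)$, block $(n,n+1)=\hat A_n(x)^*$ ($1\le n\le p_1-1$), block $(1,p_1)=e^{iy}\hat A_{p_1}(x)$, block $(p_1,1)=e^{-iy}\hat A_{p_1}(x)^*$,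 other blocks zero. $J_0$ is the block matrix with diagonal blocks $\hat B^0_n$, block $(n+1,n)=\hat A^0_n$, block $(n,n+1)=(\hat A^0_n)^*$ ($1\le n\le p_1-1$), other blocks zero. $C=\mathrm{diag}(C_1,\dots,C_{p_1})$ (block diagonal), with $C_n=\mathrm{diag}(c_n,0,\dots,0,c_n)$, $c_n=|b^0_{np_2}|+|a^0_{np_2}|+|a^0_{n-1,p_2}|$ for $2\le n\le p_1-1$; $C_1=\mathrm{diag}(e_1,0,\dots,0,e_1)+D$ with $e_1=|b^0_{1p_2}|+|a^0_{1p_2}|$; $C_{p_1}=\mathrm{diag}(e_{p_1},0,\dots,0,e_{p_1})+D$ with $e_{p_1}=|b^0_{p_1p_2}|+|a^0_{p_1-1,p_2}|$; $D=\mathrm{diag}(d_1,\dots,d_{p_2})$, $d_m=|a^1_{p_1m}|+|a^0_{p_1m}|+|a^0_{p_1,m-1}|$ with $a^0_{p_1,0}:=a^0_{p_1,p_2}$. *)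

theory Defs
  imports Complex_Main
begin

text \<open>Matrices of size p1 p2 x p1 p2 are represented as functions on pairs of
  block-indices (n,m), 1 \<le> n \<le> p1 (block), 1 \<le> m \<le> p2 (entry within block).
  The p2 x p2 blocks are functions nat \<Rightarrow> nat \<Rightarrow> complex, 1-based.\<close>

type_synonym bmat = "nat \<times> nat \<Rightarrow> nat \<times> nat \<Rightarrow> complex"

definition idx :: "nat \<Rightarrow> nat \<Rightarrow> (nat \<times> nat) set" where
  "idx p1 p2 = {1..p1} \<times> {1..p2}"

definition periodic2 :: "nat \<Rightarrow> nat \<Rightarrow> (int \<Rightarrow> int \<Rightarrow> 'a) \<Rightarrow> bool" where
  "periodic2 p1 p2 f \<longleftrightarrow> (\<forall>n m. f (n + int p1) m = f n m \<and> f n (m + int p2) = f n m)"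

definition hatM :: "(int \<Rightarrow> int \<Rightarrow> complex) \<Rightarrow> (int \<Rightarrow> int \<Rightarrow> complex) \<Rightarrow> nat \<Rightarrow> real
     \<Rightarrow> nat \<Rightarrow> nat \<Rightarrow> nat \<Rightarrow> complex" where
  "hatM d od p2 x n i j =
     (if i = j then d (int n) (int i)
      else if i = j + 1 \<and> 1 \<le> j \<and> j \<le> p2 - 1 then od (int n) (int j)
      else if j = i + 1 \<and> 1 \<le> i \<and> i \<le> p2 - 1 then cnj (od (int n) (int i))
      else if i = 1 \<and> j = p2 then exp (\<i> * complex_of_real x) * od (int n) (int p2)
      else if i = p2 \<and> j = 1 then exp (- \<i> * complex_of_real x) * cnj (od (int n) (int p2))
      else 0)"

definition hatM0 :: "(int \<Rightarrow> int \<Rightarrow> complex) \<Rightarrow> (int \<Rightarrow> int \<Rightarrow> complex) \<Rightarrow> nat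
     \<Rightarrow> nat \<Rightarrow> nat \<Rightarrow> nat \<Rightarrow> complex" where
  "hatM0 d od p2 n i j =
     (if i = j then d (int n) (int i)
      else if i = j + 1 \<and> 1 \<le> j \<and> j \<le> p2 - 1 then od (int n) (int j)
      else if j = i + 1 \<and> 1 \<le> i \<and> i \<le> p2 - 1 then cnj (od (int n) (int i))
      else 0)"

text \<open>J(x,y): diagonal blocks hat B_n, block (n+1,n) = hat A_n, block (n,n+1) = hat A_n^*,
  block (1,p1) = e^{iy} hat A_{p1}, block (p1,1) = e^{-iy} hat A_{p1}^*.\<close>
definition Jmat :: "(int \<Rightarrow> int \<Rightarrow> complex) \<Rightarrow> (int \<Rightarrow> int \<Rightarrow> complex) \<Rightarrow>
    (int \<Rightarrow> int \<Rightarrow> complex) \<Rightarrow> (int \<Rightarrow> int \<Rightarrow> complex) \<Rightarrow> nat \<Rightarrow> nat \<Rightarrow> real \<Rightarrow> real \<Rightarrow> bmat" where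
  "Jmat a0 a1 b0 b1 p1 p2 x y = (\<lambda>(n,m) (n',m').
     if n = n' then hatM b1 b0 p2 x n m m'
     else if n = n' + 1 \<and> 1 \<le> n' \<and> n' \<le> p1 - 1 then hatM a1 a0 p2 x n' m m'
     else if n' = n + 1 \<and> 1 \<le> n \<and> n \<le> p1 - 1 then cnj (hatM a1 a0 p2 x n m' m)
     else if n = 1 \<and> n' = p1 then exp (\<i> * complex_of_real y) * hatM a1 a0 p2 x p1 m m'
     else if n = p1 \<and> n' = 1 then exp (- \<i> * complex_of_real y) * cnj (hatM a1 a0 p2 x p1 m' m)
     else 0)"

definition J0mat :: "(int \<Rightarrow> int \<Rightarrow> complex) \<Rightarrow> (int \<Rightarrow> int \<Rightarrow> complex) \<Rightarrow>
    (int \<Rightarrow> int \<Rightarrow> complex) \<Rightarrow> (int \<Rightarrow> int \<Rightarrow> complex) \<Rightarrow> nat \<Rightarrow> nat \<Rightarrow> bmat" where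
  "J0mat a0 a1 b0 b1 p1 p2 = (\<lambda>(n,m) (n',m').
     if n = n' then hatM0 b1 b0 p2 n m m'
     else if n = n' + 1 \<and> 1 \<le> n' \<and> n' \<le> p1 - 1 then hatM0 a1 a0 p2 n' m m'
     else if n' = n + 1 \<and> 1 \<le> n \<and> n \<le> p1 - 1 then cnj (hatM0 a1 a0 p2 n m' m)
     else 0)"

definition cdiag :: "(int \<Rightarrow> int \<Rightarrow> complex) \<Rightarrow> (int \<Rightarrow> int \<Rightarrow> complex) \<Rightarrow>
    (int \<Rightarrow> int \<Rightarrow> complex) \<Rightarrow> nat \<Rightarrow> nat \<Rightarrow> nat \<Rightarrow> nat \<Rightarrow> real" where
  "cdiag a0 a1 b0 p1 p2 n m =
     (let P1 = int p1; P2 = int p2; N = int n; M = int m;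
          cn = (if n = 1 then cmod (b0 1 P2) + cmod (a0 1 P2)
                else if n = p1 then cmod (b0 P1 P2) + cmod (a0 (P1 - 1) P2)
                else cmod (b0 N P2) + cmod (a0 N P2) + cmod (a0 (N - 1) P2));
          dm = cmod (a1 P1 M) + cmod (a0 P1 M)
               + cmod (if m = 1 then a0 P1 P2 else a0 P1 (M - 1))
      in (if m = 1 \<or> m = p2 then cn else 0) + (if n = 1 \<or> n = p1 then dm else 0))"

definition Cmat :: "(int \<Rightarrow> int \<Rightarrow> complex) \<Rightarrow> (int \<Rightarrow> int \<Rightarrow> complex) \<Rightarrow>
    (int \<Rightarrow> int \<Rightarrow> complex) \<Rightarrow> nat \<Rightarrow> nat \<Rightarrow> bmat" where
  "Cmat a0 a1 b0 p1 p2 = (\<lambda>(n,m) (n',m').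
     if n = n' \<and> m = m' then complex_of_real (cdiag a0 a1 b0 p1 p2 n m) else 0)"

definition hermitian_on :: "'i set \<Rightarrow> ('i \<Rightarrow> 'i \<Rightarrow> complex) \<Rightarrow> bool" where
  "hermitian_on I M \<longleftrightarrow> (\<forall>i\<in>I. \<forall>j\<in>I. M i j = cnj (M j i))"

definition psd_on :: "'i set \<Rightarrow> ('i \<Rightarrow> 'i \<Rightarrow> complex) \<Rightarrow> bool" where
  "psd_on I M \<longleftrightarrow> hermitian_on I M \<and>
     (\<forall>v :: 'i \<Rightarrow> complex. 0 \<le> Re (\<Sum>i\<in>I. \<Sum>j\<in>I. cnj (v i) * M i j * v j))"

definition loewner_le :: "'i set \<Rightarrow> ('i \<Rightarrow> 'i \<Rightarrow> complex) \<Rightarrow> ('i \<Rightarrow> 'i \<Rightarrow> complex) \<Rightarrow> bool" where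
  "loewner_le I A B \<longleftrightarrow> psd_on I (\<lambda>i j. B i j - A i j)"

end

theory Submission
  imports Defs
begin

text \<open>\<open>J\<^sub>1 = J - J\<^sub>0\<close> is Hermitian, and a Hermitian \<open>H\<close> whose absolute row sums are bounded by \<open>c\<close>
  satisfies \<open>-diag c \<le> H \<le> diag c\<close>, because \<open>|v\<^sup>* H v| \<le> \<Sum>\<^sub>i\<^sub>j |H\<^sub>i\<^sub>j| (|v\<^sub>i|\<^sup>2 + |v\<^sub>j|\<^sup>2) / 2\<close>.
  Row \<open>(n, m)\<close> of \<open>J\<^sub>1\<close> meets only the blocks \<open>n\<close> and \<open>n \<plusminus> 1 (mod p\<^sub>1)\<close>: blocks inside the cell
  contribute only their corner entries, present in rows \<open>m \<in> {1, p\<^sub>2}\<close>, while the wrap-around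
  blocks \<open>e\<^sup>\<plusminus>\<^sup>i\<^sup>y A\<^sub>p\<^sub>1\<close>, present in block rows \<open>1\<close> and \<open>p\<^sub>1\<close>, contribute a full row of \<open>A\<^sub>p\<^sub>1\<close>.
  The total is exactly the diagonal entry of \<open>C\<close>.\<close>

lemma cmod_hermitian_form_le:
  fixes H :: "'i \<Rightarrow> 'i \<Rightarrow> complex"
  assumes "finite I" and herm: "hermitian_on I H"
  shows "cmod (\<Sum>i\<in>I. \<Sum>j\<in>I. cnj (v i) * H i j * v j) \<le> (\<Sum>i\<in>I. (\<Sum>j\<in>I. cmod (H i j)) * (cmod (v i))\<^sup>2)"
proof -
  let ?w = "\<lambda>i. cmod (v i)"
  have "cmod (\<Sum>i\<in>I. \<Sum>j\<in>I. cnj (v i) * H i j * v j) \<le> (\<Sum>i\<in>I. \<Sum>j\<in>I. cmod (H i j) * (?w i * ?w j))"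
    by (rule order_trans[OF norm_sum sum_mono[OF order_trans[OF norm_sum]]]) (simp add: norm_mult mult_ac)
  also have "\<dots> \<le> (\<Sum>i\<in>I. \<Sum>j\<in>I. cmod (H i j) * (((?w i)\<^sup>2 + (?w j)\<^sup>2) / 2))"
  proof (intro sum_mono mult_left_mono)
    fix i j
    show "?w i * ?w j \<le> ((?w i)\<^sup>2 + (?w j)\<^sup>2) / 2"
      using sum_squares_bound[of "?w i" "?w j"] by (simp add: field_simps)
  qed simp
  also have "\<dots> = ((\<Sum>i\<in>I. \<Sum>j\<in>I. cmod (H i j) * (?w i)\<^sup>2) + (\<Sum>i\<in>I. \<Sum>j\<in>I. cmod (H i j) * (?w j)\<^sup>2)) / 2"
    by (simp add: sum.distrib sum_divide_distrib distrib_left add_divide_distrib)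
  also have "(\<Sum>i\<in>I. \<Sum>j\<in>I. cmod (H i j) * (?w j)\<^sup>2) = (\<Sum>i\<in>I. \<Sum>j\<in>I. cmod (H i j) * (?w i)\<^sup>2)"
  proof -
    have "cmod (H i j) = cmod (H j i)" if "i \<in> I" "j \<in> I" for i j
      using herm that unfolding hermitian_on_def by (metis complex_mod_cnj)
    then show ?thesis
      by (subst sum.swap) (simp cong: sum.cong)
  qed
  finally show ?thesis
    by (simp add: sum_distrib_right)
qed

lemma psd_on_diag_add_hermitian:
  fixes H :: "'i \<Rightarrow> 'i \<Rightarrow> complex"
  assumes "finite I" and "hermitian_on I H" and row_sums: "\<forall>i\<in>I. (\<Sum>j\<in>I. cmod (H i j)) \<le> c i"
  shows "psd_on I (\<lambda>i j. (if i = j then complex_of_real (c i) else 0) + H i j)"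
  unfolding psd_on_def
proof (intro conjI allI)
  show "hermitian_on I (\<lambda>i j. (if i = j then complex_of_real (c i) else 0) + H i j)"
    unfolding hermitian_on_def
  proof (intro ballI)
    fix i j assume "i \<in> I" "j \<in> I"
    then have "H i j = cnj (H j i)"
      using assms(2) unfolding hermitian_on_def by blast
    then show "(if i = j then complex_of_real (c i) else 0) + H i j
        = cnj ((if j = i then complex_of_real (c j) else 0) + H j i)"
      by simp
  qed
next
  fix v :: "'i \<Rightarrow> complex"
  let ?form = "\<Sum>i\<in>I. \<Sum>j\<in>I. cnj (v i) * H i j * v j"
  have "(\<Sum>j\<in>I. cnj (v i) * ((if i = j then complex_of_real (c i) else 0) + H i j) * v j)
      = complex_of_real (c i * (cmod (v i))\<^sup>2) + (\<Sum>j\<in>I. cnj (v i) * H i j * v j)" if "i \<in> I" for i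
  proof -
    have "(\<Sum>j\<in>I. cnj (v i) * ((if i = j then complex_of_real (c i) else 0) + H i j) * v j)
        = (\<Sum>j\<in>I. if i = j then complex_of_real (c i) * (cnj (v i) * v j) else 0)
          + (\<Sum>j\<in>I. cnj (v i) * H i j * v j)"
      unfolding sum.distrib[symmetric] by (rule sum.cong) (auto simp: algebra_simps)
    also have "(\<Sum>j\<in>I. if i = j then complex_of_real (c i) * (cnj (v i) * v j) else 0)
        = complex_of_real (c i * (cmod (v i))\<^sup>2)"
      using assms(1) that complex_norm_square[of "v i"] by (simp add: mult.commute)
    finally show ?thesis .
  qed
  then have "(\<Sum>i\<in>I. \<Sum>j\<in>I. cnj (v i) * ((if i = j then complex_of_real (c i) else 0) + H i j) * v j)
      = complex_of_real (\<Sum>i\<in>I. c i * (cmod (v i))\<^sup>2) + ?form"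
    by (simp add: sum.distrib)
  moreover have "cmod ?form \<le> (\<Sum>i\<in>I. c i * (cmod (v i))\<^sup>2)"
  proof -
    have "cmod ?form \<le> (\<Sum>i\<in>I. (\<Sum>j\<in>I. cmod (H i j)) * (cmod (v i))\<^sup>2)"
      by (rule cmod_hermitian_form_le[OF assms(1,2)])
    also have "\<dots> \<le> (\<Sum>i\<in>I. c i * (cmod (v i))\<^sup>2)"
      using row_sums by (intro sum_mono mult_right_mono) auto
    finally show ?thesis .
  qed
  moreover have "- cmod ?form \<le> Re ?form"
    using abs_Re_le_cmod[of ?form] by linarith
  ultimately show "0 \<le> Re (\<Sum>i\<in>I. \<Sum>j\<in>I. cnj (v i) * ((if i = j then complex_of_real (c i) else 0) + H i j) * v j)"
    by simp
qed

lemma loewner_le_diag_of_row_sums: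
  fixes H :: "'i \<Rightarrow> 'i \<Rightarrow> complex"
  assumes "finite I" and herm: "hermitian_on I H" and row_sums: "\<forall>i\<in>I. (\<Sum>j\<in>I. cmod (H i j)) \<le> c i"
  defines "D \<equiv> \<lambda>i j. if i = j then complex_of_real (c i) else 0"
  shows "loewner_le I (\<lambda>i j. - D i j) H \<and> loewner_le I H D"
proof -
  have "hermitian_on I (\<lambda>i j. - H i j)"
    using herm unfolding hermitian_on_def by (metis complex_cnj_minus)
  moreover have "\<forall>i\<in>I. (\<Sum>j\<in>I. cmod (- H i j)) \<le> c i"
    using row_sums by simp
  ultimately have "psd_on I (\<lambda>i j. D i j + - H i j)"
    unfolding D_def by (rule psd_on_diag_add_hermitian[OF assms(1)])
  moreover have "psd_on I (\<lambda>i j. D i j + H i j)"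
    unfolding D_def by (rule psd_on_diag_add_hermitian[OF assms(1) herm row_sums])
  ultimately show ?thesis
    unfolding loewner_le_def by (simp add: add.commute)
qed

definition cyc_succ :: "nat \<Rightarrow> nat \<Rightarrow> nat" where
  "cyc_succ p k = (if k = p then 1 else k + 1)"

definition cyc_pred :: "nat \<Rightarrow> nat \<Rightarrow> nat" where
  "cyc_pred p k = (if k = 1 then p else k - 1)"

text \<open>\<open>p \<ge> 3\<close> makes \<open>k\<close> and its two cyclic neighbours in \<open>{1..p}\<close> pairwise distinct.\<close>

lemma sum_cyclic_neighbours:
  fixes f :: "nat \<Rightarrow> 'a::comm_monoid_add"
  assumes "p \<ge> 3" and "k \<in> {1..p}"
    and "\<And>j. j \<in> {1..p} \<Longrightarrow> j \<noteq> k \<Longrightarrow> j \<noteq> cyc_succ p k \<Longrightarrow> j \<noteq> cyc_pred p k \<Longrightarrow> f j = 0"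
  shows "(\<Sum>j\<in>{1..p}. f j) = f k + f (cyc_succ p k) + f (cyc_pred p k)"
proof -
  let ?N = "{k, cyc_succ p k, cyc_pred p k}"
  have sub: "?N \<subseteq> {1..p}" and distinct: "k \<noteq> cyc_succ p k" "k \<noteq> cyc_pred p k" "cyc_succ p k \<noteq> cyc_pred p k"
    using assms(1,2) by (auto simp: cyc_succ_def cyc_pred_def)
  have "(\<Sum>j\<in>{1..p}. f j) = (\<Sum>j\<in>?N. f j)"
    using sub assms(3) by (intro sum.mono_neutral_right) auto
  also have "\<dots> = f k + f (cyc_succ p k) + f (cyc_pred p k)"
    using distinct by (simp add: add.assoc)
  finally show ?thesis .
qed

lemma cnj_exp: "cnj (exp z) = exp (cnj z)"
  by (simp add: cis_cnj exp_eq_polar)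

lemma hatM_hermitian:
  assumes "\<forall>n m. d n m \<in> \<real>"
  shows "hatM d od p2 x n i j = cnj (hatM d od p2 x n j i)"
proof -
  have real_diagonal: "cnj (d (int n) (int i)) = d (int n) (int i)"
    using assms by (simp add: Reals_cnj_iff)
  consider "i = j" | "i = j + 1" | "j = i + 1" | "i \<noteq> j" "i \<noteq> j + 1" "j \<noteq> i + 1"
    by linarith
  then show ?thesis
    by cases (use real_diagonal in \<open>auto simp: hatM_def cnj_exp\<close>)
qed

lemma hatM0_hermitian:
  assumes "\<forall>n m. d n m \<in> \<real>"
  shows "hatM0 d od p2 n i j = cnj (hatM0 d od p2 n j i)"
proof -
  have real_diagonal: "cnj (d (int n) (int i)) = d (int n) (int i)"
    using assms by (simp add: Reals_cnj_iff)
  consider "i = j" | "i = j + 1" | "j = i + 1" | "i \<noteq> j" "i \<noteq> j + 1" "j \<noteq> i + 1"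
    by linarith
  then show ?thesis
    by cases (use real_diagonal in \<open>auto simp: hatM0_def\<close>)
qed

lemma cmod_hatM_commute: "cmod (hatM d od p2 x n j i) = cmod (hatM d od p2 x n i j)"
proof -
  consider "i = j" | "i = j + 1" | "j = i + 1" | "i \<noteq> j" "i \<noteq> j + 1" "j \<noteq> i + 1"
    by linarith
  then show ?thesis
    by cases (auto simp: hatM_def norm_mult)
qed

lemma hatM_minus_hatM0:
  assumes "p2 \<ge> 3"
  shows "hatM d od p2 x n i j - hatM0 d od p2 n i j =
    (if i = 1 \<and> j = p2 then exp (\<i> * complex_of_real x) * od (int n) (int p2)
     else if i = p2 \<and> j = 1 then exp (- \<i> * complex_of_real x) * cnj (od (int n) (int p2)) else 0)"
  using assms by (simp add: hatM_def hatM0_def)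

lemma cmod_hatM_minus_hatM0:
  assumes "p2 \<ge> 3"
  shows "cmod (hatM d od p2 x n i j - hatM0 d od p2 n i j) =
    (if i = 1 \<and> j = p2 \<or> i = p2 \<and> j = 1 then cmod (od (int n) (int p2)) else 0)"
  using assms by (auto simp: hatM_minus_hatM0 norm_mult)

lemma sum_cmod_hatM_row:
  assumes "p2 \<ge> 3" and "m \<in> {1..p2}"
  shows "(\<Sum>m'\<in>{1..p2}. cmod (hatM d od p2 x n m m')) =
    cmod (d (int n) (int m)) + cmod (od (int n) (int m))
      + cmod (if m = 1 then od (int n) (int p2) else od (int n) (int m - 1))"
proof -
  have "(\<Sum>m'\<in>{1..p2}. cmod (hatM d od p2 x n m m')) = cmod (hatM d od p2 x n m m)
      + cmod (hatM d od p2 x n m (cyc_succ p2 m)) + cmod (hatM d od p2 x n m (cyc_pred p2 m))"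
    using assms by (intro sum_cyclic_neighbours) (auto simp: hatM_def cyc_succ_def cyc_pred_def)
  moreover have "cmod (hatM d od p2 x n m (cyc_succ p2 m)) = cmod (od (int n) (int m))"
    using assms by (cases "m = p2") (auto simp: hatM_def cyc_succ_def norm_mult)
  moreover have "cmod (hatM d od p2 x n m (cyc_pred p2 m)) =
      cmod (if m = 1 then od (int n) (int p2) else od (int n) (int m - 1))"
    using assms by (cases "m = 1") (auto simp: hatM_def cyc_pred_def norm_mult of_nat_diff)
  ultimately show ?thesis
    by (simp add: hatM_def)
qed

lemma sum_cmod_hatM_minus_hatM0_row:
  assumes "p2 \<ge> 3" and "m \<in> {1..p2}"
  shows "(\<Sum>m'\<in>{1..p2}. cmod (hatM d od p2 x n m m' - hatM0 d od p2 n m m')) =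
    (if m = 1 \<or> m = p2 then cmod (od (int n) (int p2)) else 0)"
  using assms by (auto simp: cmod_hatM_minus_hatM0 sum.delta)

lemma cmod_hatM_minus_hatM0_commute:
  assumes "p2 \<ge> 3"
  shows "cmod (hatM d od p2 x n j i - hatM0 d od p2 n j i) = cmod (hatM d od p2 x n i j - hatM0 d od p2 n i j)"
  using assms by (auto simp: cmod_hatM_minus_hatM0)

lemma Jmat_hermitian:
  assumes "p1 \<ge> 3" and "\<forall>n m. b1 n m \<in> \<real>"
  shows "Jmat a0 a1 b0 b1 p1 p2 x y (n, m) (n', m') = cnj (Jmat a0 a1 b0 b1 p1 p2 x y (n', m') (n, m))"
proof (cases "n = n'")
  case True
  then show ?thesis using hatM_hermitian[OF assms(2), of b0 p2 x n' m m'] by (simp add: Jmat_def)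
next
  case False
  consider "n = n' + 1" | "n' = n + 1" | "n \<noteq> n' + 1" "n' \<noteq> n + 1"
    by linarith
  then show ?thesis
    by cases (use False assms(1) in \<open>auto simp: Jmat_def cnj_exp\<close>)
qed

lemma J0mat_hermitian:
  assumes "\<forall>n m. b1 n m \<in> \<real>"
  shows "J0mat a0 a1 b0 b1 p1 p2 (n, m) (n', m') = cnj (J0mat a0 a1 b0 b1 p1 p2 (n', m') (n, m))"
proof (cases "n = n'")
  case True
  then show ?thesis using hatM0_hermitian[OF assms, of b0 p2 n' m m'] by (simp add: J0mat_def)
next
  case False
  consider "n = n' + 1" | "n' = n + 1" | "n \<noteq> n' + 1" "n' \<noteq> n + 1"
    by linarith
  then show ?thesis
    by cases (use False in \<open>simp_all add: J0mat_def\<close>)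
qed

lemma hermitian_on_J1:
  assumes "p1 \<ge> 3" and "\<forall>n m. b1 n m \<in> \<real>"
  shows "hermitian_on I (\<lambda>i j. Jmat a0 a1 b0 b1 p1 p2 x y i j - J0mat a0 a1 b0 b1 p1 p2 i j)"
  unfolding hermitian_on_def
proof (intro ballI)
  fix i j :: "nat \<times> nat"
  obtain n m n' m' where "i = (n, m)" and "j = (n', m')"
    by fastforce
  then show "Jmat a0 a1 b0 b1 p1 p2 x y i j - J0mat a0 a1 b0 b1 p1 p2 i j
      = cnj (Jmat a0 a1 b0 b1 p1 p2 x y j i - J0mat a0 a1 b0 b1 p1 p2 j i)"
    using Jmat_hermitian[OF assms, of a0 a1 b0 p2 x y n m n' m']
      J0mat_hermitian[OF assms(2), of a0 a1 b0 p1 p2 n m n' m'] by simp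
qed

lemma sum_cmod_J1_row:
  assumes p1: "p1 \<ge> 3" and p2: "p2 \<ge> 3" and n: "n \<in> {1..p1}" and m: "m \<in> {1..p2}"
  shows "(\<Sum>j\<in>idx p1 p2. cmod (Jmat a0 a1 b0 b1 p1 p2 x y (n, m) j - J0mat a0 a1 b0 b1 p1 p2 (n, m) j))
    = cdiag a0 a1 b0 p1 p2 n m"
proof -
  define block where "block n' =
    (\<Sum>m'\<in>{1..p2}. cmod (Jmat a0 a1 b0 b1 p1 p2 x y (n, m) (n', m') - J0mat a0 a1 b0 b1 p1 p2 (n, m) (n', m')))"
    for n'
  define corner where "corner w = (if m = 1 \<or> m = p2 then w else 0)" for w :: real
  define full where "full = cmod (a1 (int p1) (int m)) + cmod (a0 (int p1) (int m))
    + cmod (if m = 1 then a0 (int p1) (int p2) else a0 (int p1) (int m - 1))"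
  have "(\<Sum>j\<in>idx p1 p2. cmod (Jmat a0 a1 b0 b1 p1 p2 x y (n, m) j - J0mat a0 a1 b0 b1 p1 p2 (n, m) j))
      = (\<Sum>n'\<in>{1..p1}. block n')"
    unfolding idx_def block_def by (simp add: sum.cartesian_product)
  also have "\<dots> = block n + block (cyc_succ p1 n) + block (cyc_pred p1 n)"
  proof (rule sum_cyclic_neighbours[OF p1 n])
    fix n' assume "n' \<in> {1..p1}" "n' \<noteq> n" "n' \<noteq> cyc_succ p1 n" "n' \<noteq> cyc_pred p1 n"
    then have "n \<noteq> n'" "n \<noteq> n' + 1" "n' \<noteq> n + 1" "\<not> (n = 1 \<and> n' = p1)" "\<not> (n = p1 \<and> n' = 1)"
      using n by (auto simp: cyc_succ_def cyc_pred_def)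
    then show "block n' = 0"
      by (auto simp: block_def Jmat_def J0mat_def)
  qed
  also have "block n = (\<Sum>m'\<in>{1..p2}. cmod (hatM b1 b0 p2 x n m m' - hatM0 b1 b0 p2 n m m'))"
    by (simp add: block_def Jmat_def J0mat_def)
  also have "\<dots> = corner (cmod (b0 (int n) (int p2)))"
    unfolding corner_def by (rule sum_cmod_hatM_minus_hatM0_row[OF p2 m])
  also have "block (cyc_succ p1 n) = (if n = p1 then full else corner (cmod (a0 (int n) (int p2))))"
  proof (cases "n = p1")
    case True
    then have "block (cyc_succ p1 n) = (\<Sum>m'\<in>{1..p2}. cmod (hatM a1 a0 p2 x p1 m m'))"
      using p1 unfolding block_def by (simp add: cyc_succ_def Jmat_def J0mat_def norm_mult cmod_hatM_commute)
    then show ?thesis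
      using True sum_cmod_hatM_row[OF p2 m] by (simp add: full_def)
  next
    case False
    then have "1 \<le> n" "n \<le> p1 - 1"
      using n by auto
    with False have "block (cyc_succ p1 n) =
        (\<Sum>m'\<in>{1..p2}. cmod (hatM a1 a0 p2 x n m' m - hatM0 a1 a0 p2 n m' m))"
      by (simp add: block_def cyc_succ_def Jmat_def J0mat_def flip: complex_cnj_diff)
    also have "\<dots> = (\<Sum>m'\<in>{1..p2}. cmod (hatM a1 a0 p2 x n m m' - hatM0 a1 a0 p2 n m m'))"
      by (rule sum.cong[OF refl cmod_hatM_minus_hatM0_commute[OF p2]])
    finally have "block (cyc_succ p1 n) =
        (\<Sum>m'\<in>{1..p2}. cmod (hatM a1 a0 p2 x n m m' - hatM0 a1 a0 p2 n m m'))" .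
    then show ?thesis
      using False sum_cmod_hatM_minus_hatM0_row[OF p2 m] by (simp add: corner_def)
  qed
  also have "block (cyc_pred p1 n) = (if n = 1 then full else corner (cmod (a0 (int n - 1) (int p2))))"
  proof (cases "n = 1")
    case True
    then have "block (cyc_pred p1 n) = (\<Sum>m'\<in>{1..p2}. cmod (hatM a1 a0 p2 x p1 m m'))"
      using p1 unfolding block_def by (simp add: cyc_pred_def Jmat_def J0mat_def norm_mult)
    then show ?thesis
      using True sum_cmod_hatM_row[OF p2 m] by (simp add: full_def)
  next
    case False
    then obtain k where k: "n = k + 1" "1 \<le> k" "k \<le> p1 - 1"
      using n by (intro that[of "n - 1"]) auto
    then have "block (cyc_pred p1 n) =
        (\<Sum>m'\<in>{1..p2}. cmod (hatM a1 a0 p2 x k m m' - hatM0 a1 a0 p2 k m m'))"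
      by (simp add: block_def cyc_pred_def Jmat_def J0mat_def)
    then show ?thesis
      using k sum_cmod_hatM_minus_hatM0_row[OF p2 m] by (simp add: corner_def)
  qed
  finally show ?thesis
    using p1 n unfolding cdiag_def Let_def corner_def full_def
    by (cases "n = 1"; cases "n = p1") auto
qed

theorem lemma3p1:
  fixes a0 a1 b0 b1 :: "int \<Rightarrow> int \<Rightarrow> complex" and p1 p2 :: nat and x y :: real
  assumes "p1 \<ge> 3" and "p2 \<ge> 3"
    and "periodic2 p1 p2 a0" and "periodic2 p1 p2 a1"
    and "periodic2 p1 p2 b0" and "periodic2 p1 p2 b1"
    and "\<forall>n m. b1 n m \<in> \<real>"
    and "x \<in> {0..2*pi}" and "y \<in> {0..2*pi}"
  shows "loewner_le (idx p1 p2) (\<lambda>i j. - Cmat a0 a1 b0 p1 p2 i j)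
           (\<lambda>i j. Jmat a0 a1 b0 b1 p1 p2 x y i j - J0mat a0 a1 b0 b1 p1 p2 i j)
       \<and> loewner_le (idx p1 p2)
           (\<lambda>i j. Jmat a0 a1 b0 b1 p1 p2 x y i j - J0mat a0 a1 b0 b1 p1 p2 i j)
           (Cmat a0 a1 b0 p1 p2)"
proof -
  let ?J1 = "\<lambda>i j. Jmat a0 a1 b0 b1 p1 p2 x y i j - J0mat a0 a1 b0 b1 p1 p2 i j"
  let ?c = "\<lambda>(n, m). cdiag a0 a1 b0 p1 p2 n m"
  have "hermitian_on (idx p1 p2) ?J1"
    by (rule hermitian_on_J1[OF assms(1,7)])
  moreover have "\<forall>i\<in>idx p1 p2. (\<Sum>j\<in>idx p1 p2. cmod (?J1 i j)) \<le> ?c i"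
    using sum_cmod_J1_row[OF assms(1,2)] by (auto simp: idx_def)
  moreover have "Cmat a0 a1 b0 p1 p2 = (\<lambda>i j. if i = j then complex_of_real (?c i) else 0)"
    by (auto simp: Cmat_def fun_eq_iff)
  ultimately show ?thesis
    using loewner_le_diag_of_row_sums[of "idx p1 p2" ?J1 ?c] by (simp add: idx_def)
qed

end
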